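(* Let $X$ be a nonempty set and $d$ a reflexive triangular symmetric on $X$ such that $(X,d)$ is 0-complete. Let $T:X\to X$, $G\in\{M_1,M_2,M_3\}$, and suppose $d(Tx,Ty)\le\varphi(G(x,y))$ for all $x,y\in X$, for some asymptotic normal function $\varphi:[0,\infty)\to[0,\infty)$. Then $T$ is $d$-asymptotic, i.e. $\lim_n d(T^nx,T^{n+1}x)=0$ for every $x\in X$.
   Context: A symmetric on $X$ is a map $d:X\times X\to[0,\infty)$ with $d(x,y)=d(y,x)$; it is reflexive triangular if $d(x,z)+d(y,y)\le d(x,y)+d(y,z)$ for all $x,y,z\in X$. A sequence $(x_n)$ $0d$-converges to $x$ if $d(x_n,x)\to 0$; it is $0d$-Cauchy if for every $\varepsilon>0$ there is $j$ with $d(x_m,x_n)<\varepsilon$ whenever $j\le m<n$; $(X,d)$ is 0-complete if every $0d$-Cauchy sequence $0d$-converges to some point. Notation: $M_1(x,y)=d(x,y)$, $H(x,y)=\max\{d(x,Tx),d(y,Ty)\}$, $L(x,y)=\frac12[d(x,Ty)+d(Tx,y)]$, $M_2=\max\{M_1,H\}$, $M_3=\max\{M_1,H,L\}$. $\varphi$ is normal if $\varphi(0)=0$ and $\varphi(t)<t$ for $t>0$; it is asymptotic normal if it is normal and every sequence $(r_n)$ in $[0,\infty)$ with $r_{n+1}\le\varphi(r_n)$ for all $n$ satisfies $r_n\to0$. *)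

theory Defs
  imports Complex_Main
begin

definition symmetric_on :: "'a set \<Rightarrow> ('a \<Rightarrow> 'a \<Rightarrow> real) \<Rightarrow> bool" where
  "symmetric_on X d \<longleftrightarrow> (\<forall>x\<in>X. \<forall>y\<in>X. d x y \<ge> 0 \<and> d x y = d y x)"

definition reflexive_triangular :: "'a set \<Rightarrow> ('a \<Rightarrow> 'a \<Rightarrow> real) \<Rightarrow> bool" where
  "reflexive_triangular X d \<longleftrightarrow>
     (\<forall>x\<in>X. \<forall>y\<in>X. \<forall>z\<in>X. d x z + d y y \<le> d x y + d y z)"

definition zero_converges :: "('a \<Rightarrow> 'a \<Rightarrow> real) \<Rightarrow> (nat \<Rightarrow> 'a) \<Rightarrow> 'a \<Rightarrow> bool" where
  "zero_converges d s x \<longleftrightarrow> (\<lambda>n. d (s n) x) \<longlonglongrightarrow> 0"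

definition zero_cauchy :: "('a \<Rightarrow> 'a \<Rightarrow> real) \<Rightarrow> (nat \<Rightarrow> 'a) \<Rightarrow> bool" where
  "zero_cauchy d s \<longleftrightarrow> (\<forall>e>0. \<exists>j. \<forall>m n. j \<le> m \<and> m < n \<longrightarrow> d (s m) (s n) < e)"

definition zero_complete :: "'a set \<Rightarrow> ('a \<Rightarrow> 'a \<Rightarrow> real) \<Rightarrow> bool" where
  "zero_complete X d \<longleftrightarrow>
     (\<forall>s. (\<forall>n. s n \<in> X) \<and> zero_cauchy d s \<longrightarrow> (\<exists>x\<in>X. zero_converges d s x))"

definition M1 :: "('a \<Rightarrow> 'a \<Rightarrow> real) \<Rightarrow> ('a \<Rightarrow> 'a) \<Rightarrow> 'a \<Rightarrow> 'a \<Rightarrow> real" where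
  "M1 d T x y = d x y"

definition Hf :: "('a \<Rightarrow> 'a \<Rightarrow> real) \<Rightarrow> ('a \<Rightarrow> 'a) \<Rightarrow> 'a \<Rightarrow> 'a \<Rightarrow> real" where
  "Hf d T x y = max (d x (T x)) (d y (T y))"

definition Lf :: "('a \<Rightarrow> 'a \<Rightarrow> real) \<Rightarrow> ('a \<Rightarrow> 'a) \<Rightarrow> 'a \<Rightarrow> 'a \<Rightarrow> real" where
  "Lf d T x y = (d x (T y) + d (T x) y) / 2"

definition M2 :: "('a \<Rightarrow> 'a \<Rightarrow> real) \<Rightarrow> ('a \<Rightarrow> 'a) \<Rightarrow> 'a \<Rightarrow> 'a \<Rightarrow> real" where
  "M2 d T x y = max (M1 d T x y) (Hf d T x y)"

definition M3 :: "('a \<Rightarrow> 'a \<Rightarrow> real) \<Rightarrow> ('a \<Rightarrow> 'a) \<Rightarrow> 'a \<Rightarrow> 'a \<Rightarrow> real" where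
  "M3 d T x y = max (max (M1 d T x y) (Hf d T x y)) (Lf d T x y)"

text \<open>phi maps [0,inf) to [0,inf); only its values on [0,inf) matter.\<close>
definition normal_fun :: "(real \<Rightarrow> real) \<Rightarrow> bool" where
  "normal_fun \<phi> \<longleftrightarrow> (\<forall>t\<ge>0. \<phi> t \<ge> 0) \<and> \<phi> 0 = 0 \<and> (\<forall>t>0. \<phi> t < t)"

definition asymptotic_normal :: "(real \<Rightarrow> real) \<Rightarrow> bool" where
  "asymptotic_normal \<phi> \<longleftrightarrow> normal_fun \<phi> \<and>
     (\<forall>r::nat \<Rightarrow> real. (\<forall>n. r n \<ge> 0) \<and> (\<forall>n. r (Suc n) \<le> \<phi> (r n)) \<longrightarrow> r \<longlonglongrightarrow> 0)"

end

theory Submission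
  imports Defs
begin

text \<open>At consecutive orbit points a, Ta the reflexive triangle inequality gives
  L(a,Ta) \<le> max(d(a,Ta), d(Ta,T^2 a)), so each admissible G(a,Ta) equals d(a,Ta) or that
  maximum. If the maximum were d(Ta,T^2 a) > d(a,Ta), the contraction would give
  d(Ta,T^2 a) \<le> phi(d(Ta,T^2 a)) < d(Ta,T^2 a); hence the consecutive distances satisfy
  r(n+1) \<le> phi(r n) and tend to 0 by asymptotic normality.\<close>

lemma funpow_in_closed:
  assumes "\<forall>x\<in>X. T x \<in> X" and "x \<in> X"
  shows "(T ^^ n) x \<in> X"
  by (induction n) (use assms in auto)

lemma M2_consecutive: "M2 d T a (T a) = max (d a (T a)) (d (T a) (T (T a)))"
  unfolding M2_def M1_def Hf_def by simp

lemma Lf_consecutive_le: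
  assumes "reflexive_triangular X d" and "a \<in> X" and "T a \<in> X" and "T (T a) \<in> X"
  shows "Lf d T a (T a) \<le> max (d a (T a)) (d (T a) (T (T a)))"
proof -
  have "d a (T (T a)) + d (T a) (T a) \<le> d a (T a) + d (T a) (T (T a))"
    using assms unfolding reflexive_triangular_def by blast
  then show ?thesis
    unfolding Lf_def by (simp add: max_def)
qed

lemma M3_consecutive:
  assumes "reflexive_triangular X d" and "a \<in> X" and "T a \<in> X" and "T (T a) \<in> X"
  shows "M3 d T a (T a) = M2 d T a (T a)"
  using Lf_consecutive_le[OF assms] M2_consecutive[of d T a]
  unfolding M3_def M2_def[symmetric] by (simp add: max_absorb1)

lemma normal_fun_le_of_le_max:
  assumes "normal_fun \<phi>" and "0 \<le> s" and "t \<le> \<phi> (max s t)"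
  shows "t \<le> \<phi> s"
proof (cases "t \<le> s")
  case True
  then show ?thesis using assms(3) by (simp add: max_def)
next
  case False
  then have "0 < t" and "max s t = t" using assms(2) by auto
  then have "\<phi> (max s t) < t" using assms(1) unfolding normal_fun_def by auto
  with assms(3) show ?thesis by simp
qed

lemma orbit_distance_step:
  assumes "symmetric_on X d" and "reflexive_triangular X d" and "\<forall>x\<in>X. T x \<in> X"
    and "G \<in> {M1 d T, M2 d T, M3 d T}" and "normal_fun \<phi>"
    and "\<forall>x\<in>X. \<forall>y\<in>X. d (T x) (T y) \<le> \<phi> (G x y)" and "a \<in> X"
  shows "d (T a) (T (T a)) \<le> \<phi> (d a (T a))"
proof -
  have X: "T a \<in> X" "T (T a) \<in> X" using assms(3,7) by auto
  have "0 \<le> d a (T a)" using assms(1,7) X unfolding symmetric_on_def by blast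
  moreover have "G a (T a) = d a (T a) \<or> G a (T a) = max (d a (T a)) (d (T a) (T (T a)))"
    using assms(4) M3_consecutive[OF assms(2,7) X] M2_consecutive[of d T a]
    unfolding M1_def by auto
  moreover have "d (T a) (T (T a)) \<le> \<phi> (G a (T a))"
    using assms(6,7) X by blast
  ultimately show ?thesis
    using normal_fun_le_of_le_max[OF assms(5)] by auto
qed

theorem lemma3:
  fixes X :: "'a set" and d :: "'a \<Rightarrow> 'a \<Rightarrow> real" and T :: "'a \<Rightarrow> 'a"
    and G :: "'a \<Rightarrow> 'a \<Rightarrow> real" and \<phi> :: "real \<Rightarrow> real"
  assumes "X \<noteq> {}"
    and "symmetric_on X d"
    and "reflexive_triangular X d"
    and "zero_complete X d"
    and "\<forall>x\<in>X. T x \<in> X"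
    and "G \<in> {M1 d T, M2 d T, M3 d T}"
    and "asymptotic_normal \<phi>"
    and "\<forall>x\<in>X. \<forall>y\<in>X. d (T x) (T y) \<le> \<phi> (G x y)"
  shows "\<forall>x\<in>X. (\<lambda>n. d ((T ^^ n) x) ((T ^^ Suc n) x)) \<longlonglongrightarrow> 0"
proof
  fix x assume x: "x \<in> X"
  have normal: "normal_fun \<phi>"
    and asymptotic: "\<And>r. (\<forall>n. r n \<ge> 0) \<and> (\<forall>n. r (Suc n) \<le> \<phi> (r n)) \<Longrightarrow> r \<longlonglongrightarrow> 0"
    using assms(7) unfolding asymptotic_normal_def by blast+
  have orbit: "(T ^^ n) x \<in> X" for n
    using funpow_in_closed[OF assms(5) x] .
  show "(\<lambda>n. d ((T ^^ n) x) ((T ^^ Suc n) x)) \<longlonglongrightarrow> 0"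
  proof (rule asymptotic, intro conjI allI)
    fix n
    show "0 \<le> d ((T ^^ n) x) ((T ^^ Suc n) x)"
      using assms(2) orbit[of n] orbit[of "Suc n"] unfolding symmetric_on_def by blast
    show "d ((T ^^ Suc n) x) ((T ^^ Suc (Suc n)) x) \<le> \<phi> (d ((T ^^ n) x) ((T ^^ Suc n) x))"
      using orbit_distance_step[OF assms(2,3,5,6) normal assms(8) orbit[of n]] by simp
  qed
qed

end
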